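(* Under B3 the functions $k_1(\theta,x):=\min\{k\geq x_\theta: T(\theta,k)\geq T(\theta,x) \}$ and $k_2(\theta,x):=\max\{k\leq x_\theta: T(\theta,k)\geq T(\theta,x) \}$ are such that $$\mathcal{A}_{\theta,x}=\{k\in\mathcal{X}: k \geq k_1(\theta,x)\}\cup\{k\in\mathcal{X}: k \leq k_2(\theta,x)\}.$$ For any $x$, at least one of $k_1(\theta,x)$ and $k_2(\theta,x)$ is non-constant in $\theta$.
   Context: Let $\Theta$ be a connected open subset of $\mathbb{R}$, $\mathcal{X}\subseteq\mathbb{Z}$ a sample space of consecutive integers, and $P_\theta$ a family of discrete distributions on $\mathcal{X}$, with $\mathrm{P}_\theta$ denoting probability under $P_\theta$. Consider a test of $H_0:\theta=\theta_0$ versus $H_1:\theta\neq\theta_0$ with test statistic $T(\theta_0,x)$ and p-value $\lambda(\theta_0,x)=\mathrm{P}_{\theta_0}(T(\theta_0,X)\geq T(\theta_0,x))=\sum_{k\in\mathcal{A}_{\theta_0,x}}\mathrm{P}_{\theta_0}(X=k)$, where $\mathcal{A}_{\theta,x}=\{k\in\mathcal{X}:T(\theta,k)\geq T(\theta,x)\}$. The test is strictly two-sided, in particular satisfying (B1) for any $x\in\mathcal{X}$ there exists $\theta_x\in\Theta$ with $T(\theta_x,x)<T(\theta_x,y)$ for all $y\in\mathcal{X}\backslash\{x\}$. Condition B3: for any $\theta\in\Theta$ there exists $x_\theta\in\mathcal{X}$ such that $T(\theta,x)$ is decreasing in $x$ when $x<x_\theta$ and increasing in $x$ when $x>x_\theta$.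 *)

theory Defs
  imports "HOL-Analysis.Analysis" "HOL-Library.Extended_Real"
begin

definition consecutive_ints :: "int set \<Rightarrow> bool" where
  "consecutive_ints X \<longleftrightarrow> (\<forall>a b c. a \<in> X \<longrightarrow> c \<in> X \<longrightarrow> a \<le> b \<longrightarrow> b \<le> c \<longrightarrow> b \<in> X)"

definition acc_set :: "(real \<Rightarrow> int \<Rightarrow> real) \<Rightarrow> int set \<Rightarrow> real \<Rightarrow> int \<Rightarrow> int set" where
  "acc_set T X \<theta> x = {k \<in> X. T \<theta> k \<ge> T \<theta> x}"

definition cond_B1 :: "(real \<Rightarrow> int \<Rightarrow> real) \<Rightarrow> real set \<Rightarrow> int set \<Rightarrow> bool" where
  "cond_B1 T \<Theta> X \<longleftrightarrow>
     (\<forall>x\<in>X. \<exists>\<theta>x\<in>\<Theta>. \<forall>y\<in>X - {x}. T \<theta>x x < T \<theta>x y)"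

text \<open>Condition B3, with the turning point x_theta given by the function xt.\<close>
definition cond_B3 :: "(real \<Rightarrow> int \<Rightarrow> real) \<Rightarrow> real set \<Rightarrow> int set \<Rightarrow> (real \<Rightarrow> int) \<Rightarrow> bool" where
  "cond_B3 T \<Theta> X xt \<longleftrightarrow>
     (\<forall>\<theta>\<in>\<Theta>. xt \<theta> \<in> X \<and>
        (\<forall>a\<in>X. \<forall>b\<in>X. a \<le> b \<longrightarrow> b \<le> xt \<theta> \<longrightarrow> T \<theta> b \<le> T \<theta> a) \<and>
        (\<forall>a\<in>X. \<forall>b\<in>X. xt \<theta> \<le> a \<longrightarrow> a \<le> b \<longrightarrow> T \<theta> a \<le> T \<theta> b))"

text \<open>k_1 and k_2, valued in the extended reals (min of the empty set is +infinity,
  max of the empty set is -infinity).\<close>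
definition k1 :: "(real \<Rightarrow> int \<Rightarrow> real) \<Rightarrow> int set \<Rightarrow> (real \<Rightarrow> int) \<Rightarrow> real \<Rightarrow> int \<Rightarrow> ereal" where
  "k1 T X xt \<theta> x = Inf ((\<lambda>k. ereal (real_of_int k)) ` {k \<in> X. k \<ge> xt \<theta> \<and> T \<theta> k \<ge> T \<theta> x})"

definition k2 :: "(real \<Rightarrow> int \<Rightarrow> real) \<Rightarrow> int set \<Rightarrow> (real \<Rightarrow> int) \<Rightarrow> real \<Rightarrow> int \<Rightarrow> ereal" where
  "k2 T X xt \<theta> x = Sup ((\<lambda>k. ereal (real_of_int k)) ` {k \<in> X. k \<le> xt \<theta> \<and> T \<theta> k \<ge> T \<theta> x})"

end

theory Submission
  imports Defs
begin

text \<open>Under B3, \<open>T \<theta>\<close> is nonincreasing up to the turning point \<open>x\<^sub>\<theta>\<close> and nondecreasing after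
  it, so the acceptance region \<open>{k. T \<theta> k \<ge> T \<theta> x}\<close> is the union of a right tail starting
  at its least element \<open>k\<^sub>1 \<ge> x\<^sub>\<theta>\<close> and a left tail ending at its greatest element
  \<open>k\<^sub>2 \<le> x\<^sub>\<theta>\<close>. For the second claim, take by B1 a parameter \<open>\<theta>\<^sub>x\<close> at which \<open>x\<close> is the
  strict minimiser of \<open>T\<close>: B3 forces \<open>x\<^sub>\<theta> = x\<close> there, hence \<open>k\<^sub>1 = k\<^sub>2 = x\<close>. At the parameter
  \<open>\<theta>\<^sub>y\<close> of another point \<open>y\<close>, the turning point is \<open>y\<close>, so \<open>k\<^sub>1 \<ge> y > x\<close> if \<open>y > x\<close> and
  \<open>k\<^sub>2 \<le> y < x\<close> if \<open>y < x\<close>.\<close>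

lemma k1_le_iff:
  "k1 T X xt \<theta> x \<le> ereal (real_of_int k) \<longleftrightarrow>
     (\<exists>j\<in>X. xt \<theta> \<le> j \<and> T \<theta> x \<le> T \<theta> j \<and> j \<le> k)"
proof
  assume le: "k1 T X xt \<theta> x \<le> ereal (real_of_int k)"
  show "\<exists>j\<in>X. xt \<theta> \<le> j \<and> T \<theta> x \<le> T \<theta> j \<and> j \<le> k"
  proof (rule ccontr)
    assume "\<not> ?thesis"
    then have "ereal (real_of_int (k + 1)) \<le> k1 T X xt \<theta> x"
      unfolding k1_def by (force intro!: Inf_greatest)
    from order_trans[OF this le] show False by simp
  qed
next
  assume "\<exists>j\<in>X. xt \<theta> \<le> j \<and> T \<theta> x \<le> T \<theta> j \<and> j \<le> k"
  then obtain j where "j \<in> X" "xt \<theta> \<le> j" "T \<theta> x \<le> T \<theta> j" "j \<le> k" by blast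
  then have "k1 T X xt \<theta> x \<le> ereal (real_of_int j)"
    unfolding k1_def by (auto intro!: Inf_lower)
  also have "\<dots> \<le> ereal (real_of_int k)" using \<open>j \<le> k\<close> by simp
  finally show "k1 T X xt \<theta> x \<le> ereal (real_of_int k)" .
qed

lemma ge_k2_iff:
  "ereal (real_of_int k) \<le> k2 T X xt \<theta> x \<longleftrightarrow>
     (\<exists>j\<in>X. j \<le> xt \<theta> \<and> T \<theta> x \<le> T \<theta> j \<and> k \<le> j)"
proof
  assume ge: "ereal (real_of_int k) \<le> k2 T X xt \<theta> x"
  show "\<exists>j\<in>X. j \<le> xt \<theta> \<and> T \<theta> x \<le> T \<theta> j \<and> k \<le> j"
  proof (rule ccontr)
    assume "\<not> ?thesis"
    then have "k2 T X xt \<theta> x \<le> ereal (real_of_int (k - 1))"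
      unfolding k2_def by (force intro!: Sup_least)
    from order_trans[OF ge this] show False by simp
  qed
next
  assume "\<exists>j\<in>X. j \<le> xt \<theta> \<and> T \<theta> x \<le> T \<theta> j \<and> k \<le> j"
  then obtain j where "j \<in> X" "j \<le> xt \<theta>" "T \<theta> x \<le> T \<theta> j" "k \<le> j" by blast
  then have "ereal (real_of_int j) \<le> k2 T X xt \<theta> x"
    unfolding k2_def by (auto intro!: Sup_upper)
  have "ereal (real_of_int k) \<le> ereal (real_of_int j)" using \<open>k \<le> j\<close> by simp
  also have "\<dots> \<le> k2 T X xt \<theta> x" by fact
  finally show "ereal (real_of_int k) \<le> k2 T X xt \<theta> x" .
qed

lemma turning_point_le_k1: "ereal (real_of_int (xt \<theta>)) \<le> k1 T X xt \<theta> x"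
  unfolding k1_def by (auto intro!: Inf_greatest)

lemma k2_le_turning_point: "k2 T X xt \<theta> x \<le> ereal (real_of_int (xt \<theta>))"
  unfolding k2_def by (auto intro!: Sup_least)

lemma k1_eq_turning_point:
  assumes "xt \<theta> \<in> X"
  shows "k1 T X xt \<theta> (xt \<theta>) = ereal (real_of_int (xt \<theta>))"
  using assms turning_point_le_k1[of xt \<theta>] k1_le_iff[of T X xt \<theta> "xt \<theta>" "xt \<theta>"]
  by (auto intro: antisym)

lemma k2_eq_turning_point:
  assumes "xt \<theta> \<in> X"
  shows "k2 T X xt \<theta> (xt \<theta>) = ereal (real_of_int (xt \<theta>))"
  using assms k2_le_turning_point[of T X xt \<theta>] ge_k2_iff[of "xt \<theta>" T X xt \<theta> "xt \<theta>"]
  by (auto intro: antisym)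

lemma acc_set_eq_tails:
  assumes "cond_B3 T \<Theta> X xt" and "\<theta> \<in> \<Theta>"
  shows "acc_set T X \<theta> x =
           {k \<in> X. ereal (real_of_int k) \<ge> k1 T X xt \<theta> x}
           \<union> {k \<in> X. ereal (real_of_int k) \<le> k2 T X xt \<theta> x}"
proof -
  have decr: "T \<theta> b \<le> T \<theta> a" if "a \<in> X" "b \<in> X" "a \<le> b" "b \<le> xt \<theta>" for a b
    using assms that unfolding cond_B3_def by blast
  have incr: "T \<theta> a \<le> T \<theta> b" if "a \<in> X" "b \<in> X" "xt \<theta> \<le> a" "a \<le> b" for a b
    using assms that unfolding cond_B3_def by blast
  show ?thesis
  proof (intro set_eqI iffI)
    fix k assume "k \<in> acc_set T X \<theta> x"
    then have "k \<in> X" "T \<theta> x \<le> T \<theta> k" by (auto simp: acc_set_def)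
    then show "k \<in> {k \<in> X. ereal (real_of_int k) \<ge> k1 T X xt \<theta> x}
                 \<union> {k \<in> X. ereal (real_of_int k) \<le> k2 T X xt \<theta> x}"
      unfolding k1_le_iff ge_k2_iff using linorder_linear[of "xt \<theta>" k] by blast
  next
    fix k assume "k \<in> {k \<in> X. ereal (real_of_int k) \<ge> k1 T X xt \<theta> x}
                    \<union> {k \<in> X. ereal (real_of_int k) \<le> k2 T X xt \<theta> x}"
    then consider
        (right) j where "k \<in> X" "j \<in> X" "xt \<theta> \<le> j" "T \<theta> x \<le> T \<theta> j" "j \<le> k"
      | (left) j where "k \<in> X" "j \<in> X" "j \<le> xt \<theta>" "T \<theta> x \<le> T \<theta> j" "k \<le> j"
      unfolding k1_le_iff ge_k2_iff by blast
    then show "k \<in> acc_set T X \<theta> x"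
    proof cases
      case right
      then show ?thesis using incr[of j k] by (auto simp: acc_set_def)
    next
      case left
      then show ?thesis using decr[of k j] by (auto simp: acc_set_def)
    qed
  qed
qed

lemma turning_point_eq_strict_minimiser:
  assumes "cond_B3 T \<Theta> X xt" and "\<theta> \<in> \<Theta>" and "x \<in> X"
    and min: "\<forall>y\<in>X - {x}. T \<theta> x < T \<theta> y"
  shows "xt \<theta> = x"
proof (rule ccontr)
  assume ne: "xt \<theta> \<noteq> x"
  have "xt \<theta> \<in> X" using assms(1,2) unfolding cond_B3_def by blast
  with ne min have "T \<theta> x < T \<theta> (xt \<theta>)" by blast
  moreover have "T \<theta> (xt \<theta>) \<le> T \<theta> x"
    using assms(1,2) \<open>x \<in> X\<close> \<open>xt \<theta> \<in> X\<close> unfolding cond_B3_def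
    by (cases "xt \<theta> \<le> x") auto
  ultimately show False by simp
qed

lemma k1_or_k2_nonconstant:
  assumes "cond_B1 T \<Theta> X" and "cond_B3 T \<Theta> X xt"
    and "x \<in> X" and "y \<in> X" and "y \<noteq> x"
  shows "(\<exists>\<theta>\<in>\<Theta>. \<exists>\<theta>'\<in>\<Theta>. k1 T X xt \<theta> x \<noteq> k1 T X xt \<theta>' x)
       \<or> (\<exists>\<theta>\<in>\<Theta>. \<exists>\<theta>'\<in>\<Theta>. k2 T X xt \<theta> x \<noteq> k2 T X xt \<theta>' x)"
proof -
  obtain \<theta>x where \<theta>x: "\<theta>x \<in> \<Theta>" "xt \<theta>x = x"
    using assms(1-3) turning_point_eq_strict_minimiser unfolding cond_B1_def by metis
  obtain \<theta>y where \<theta>y: "\<theta>y \<in> \<Theta>" "xt \<theta>y = y"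
    using assms(1,2,4) turning_point_eq_strict_minimiser unfolding cond_B1_def by metis
  show ?thesis
  proof (cases "y < x")
    case True
    have "k2 T X xt \<theta>y x \<le> ereal (real_of_int y)"
      using k2_le_turning_point \<theta>y(2) by metis
    also have "\<dots> < k2 T X xt \<theta>x x"
      using k2_eq_turning_point[of xt \<theta>x] \<theta>x(2) \<open>x \<in> X\<close> True by simp
    finally show ?thesis using \<theta>x(1) \<theta>y(1) by (metis less_irrefl)
  next
    case False
    with \<open>y \<noteq> x\<close> have "k1 T X xt \<theta>x x < ereal (real_of_int y)"
      using k1_eq_turning_point[of xt \<theta>x] \<theta>x(2) \<open>x \<in> X\<close> by simp
    also have "\<dots> \<le> k1 T X xt \<theta>y x"
      using turning_point_le_k1 \<theta>y(2) by metis
    finally show ?thesis using \<theta>x(1) \<theta>y(1) by (metis less_irrefl)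
  qed
qed

theorem proposition2:
  fixes \<Theta> :: "real set" and X :: "int set"
    and T :: "real \<Rightarrow> int \<Rightarrow> real" and xt :: "real \<Rightarrow> int"
  assumes "open \<Theta>" and "connected \<Theta>" and "\<Theta> \<noteq> {}"
    and "consecutive_ints X" and "\<exists>a\<in>X. \<exists>b\<in>X. a \<noteq> b"
    and "cond_B1 T \<Theta> X"
    and "cond_B3 T \<Theta> X xt"
  shows "(\<forall>\<theta>\<in>\<Theta>. \<forall>x\<in>X.
            acc_set T X \<theta> x =
              {k \<in> X. ereal (real_of_int k) \<ge> k1 T X xt \<theta> x}
              \<union> {k \<in> X. ereal (real_of_int k) \<le> k2 T X xt \<theta> x})
       \<and> (\<forall>x\<in>X. (\<exists>\<theta>\<in>\<Theta>. \<exists>\<theta>'\<in>\<Theta>. k1 T X xt \<theta> x \<noteq> k1 T X xt \<theta>' x)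
               \<or> (\<exists>\<theta>\<in>\<Theta>. \<exists>\<theta>'\<in>\<Theta>. k2 T X xt \<theta> x \<noteq> k2 T X xt \<theta>' x))"
proof (intro conjI ballI)
  show "acc_set T X \<theta> x =
          {k \<in> X. ereal (real_of_int k) \<ge> k1 T X xt \<theta> x}
          \<union> {k \<in> X. ereal (real_of_int k) \<le> k2 T X xt \<theta> x}" if "\<theta> \<in> \<Theta>" for \<theta> x
    using acc_set_eq_tails[OF assms(7) that] .
next
  fix x assume "x \<in> X"
  moreover obtain y where "y \<in> X" "y \<noteq> x" using assms(5) by blast
  ultimately show "(\<exists>\<theta>\<in>\<Theta>. \<exists>\<theta>'\<in>\<Theta>. k1 T X xt \<theta> x \<noteq> k1 T X xt \<theta>' x)
               \<or> (\<exists>\<theta>\<in>\<Theta>. \<exists>\<theta>'\<in>\<Theta>. k2 T X xt \<theta> x \<noteq> k2 T X xt \<theta>' x)"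
    using k1_or_k2_nonconstant[OF assms(6,7)] by blast
qed

end
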